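(* Let $A(0)=1$ and $A(n)=nA(n-1)+1$ for $n\ge1$ (so $A(n)=\sum_{r=0}^n n!/r!$). For every integer $M>0$, the sequence $(A(n)\bmod M)_{n\ge0}$ is periodic with period exactly $M$. *)

theory Defs
  imports Main
begin

fun A :: "nat \<Rightarrow> nat" where
  "A 0 = 1"
| "A (Suc n) = Suc n * A n + 1"

definition is_period :: "(nat \<Rightarrow> 'a) \<Rightarrow> nat \<Rightarrow> bool" where
  "is_period s p \<longleftrightarrow> p > 0 \<and> (\<forall>n. s (n + p) = s n)"

end

theory Submission
  imports Defs "HOL-Number_Theory.Cong"
begin

text \<open>Modulo M the recurrence A(n+1) = (n+1) A(n) + 1 only sees n mod M, so the shifted
sequence n \<mapsto> A(n+M) satisfies the same recurrence as A; it also starts at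
A(M) = M A(M-1) + 1 \<equiv> 1 = A(0), hence agrees with A everywhere and M is a period.
Conversely, a period p forces A(p) \<equiv> 1 and A(p+1) \<equiv> 2, while the recurrence gives
A(p+1) \<equiv> p + 2; thus M divides p.\<close>

lemma A_start_cong: "[A M = A 0] (mod M)"
proof (cases M)
  case (Suc m)
  have "[M * A m + 1 = 0 + 1] (mod M)"
    by (intro cong_add cong_mult_self_left cong_refl)
  then show ?thesis using Suc by simp
qed simp

lemma A_shift_cong: "[A (n + M) = A n] (mod M)"
proof (induction n)
  case 0
  show ?case using A_start_cong by simp
next
  case (Suc n)
  have "[Suc n + M = Suc n] (mod M)"
    by (simp only: cong_def mod_add_self2)
  then have "[Suc (n + M) * A (n + M) + 1 = Suc n * A n + 1] (mod M)"
    using Suc.IH by (intro cong_add cong_mult) simp_all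
  then show ?case by simp
qed

lemma A_Suc_cong_of_A_cong_one:
  assumes "[A p = 1] (mod M)"
  shows "[A (Suc p) = p + 2] (mod M)"
proof -
  have "[Suc p * A p + 1 = Suc p * 1 + 1] (mod M)"
    using assms by (intro cong_add cong_mult) simp_all
  then show ?thesis by simp
qed

lemma dvd_of_A_cong_initial:
  assumes "[A p = A 0] (mod M)" and "[A (Suc p) = A 1] (mod M)"
  shows "M dvd p"
proof -
  have "[p + 2 = 2] (mod M)"
    using A_Suc_cong_of_A_cong_one[of p M] assms
    by (simp add: numeral_2_eq_2) (meson cong_sym cong_trans)
  then have "[p = 0] (mod M)"
    by (simp only: cong_add_rcancel_0_nat)
  then show ?thesis
    by (simp add: cong_0_iff)
qed

theorem propositionA5:
  fixes M :: nat
  assumes "M > 0"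
  shows "is_period (\<lambda>n. A n mod M) M \<and>
         (\<forall>p. is_period (\<lambda>n. A n mod M) p \<longrightarrow> M \<le> p)"
proof
  show "is_period (\<lambda>n. A n mod M) M"
    using assms A_shift_cong by (simp add: is_period_def cong_def)
next
  show "\<forall>p. is_period (\<lambda>n. A n mod M) p \<longrightarrow> M \<le> p"
  proof (intro allI impI)
    fix p
    assume "is_period (\<lambda>n. A n mod M) p"
    then have "p > 0" and period: "\<And>n. [A (n + p) = A n] (mod M)"
      by (auto simp: is_period_def cong_def)
    have "M dvd p"
      using period[of 0] period[of 1] by (intro dvd_of_A_cong_initial) simp_all
    then show "M \<le> p"
      using \<open>p > 0\<close> by (rule dvd_imp_le)
  qed
qed

end
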